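(* Let $K\subset J^1\mathbb{R}$ be a connected oriented Legendrian knot, let $1<k\le m\le n$, let $\beta\in S_{m-1}$ be a positive permutation braid regarded as a Legendrian $n$-tangle by placing $n-m+1$ horizontal strands below it, and let $\nu\in\mathcal{R}\mathfrak{Leg}_n$. Then $$z\,\widetilde R^{(m-1)}_{(K,\beta\,\alpha_{k,m}\,\nu)}(z)=R^{\tau(m-k+1,m)}_{( *;K,\beta\nu)}(z),$$ where $\alpha_{k,m}$ is regarded as an $n$-tangle combination by adding $n-m$ horizontal strands below, and $*$ is the location in $\beta\nu$ between $\nu$ and $\beta$ (immediately to the left of $\beta$).
   Context: Conventions. $J^1\mathbb{R}=\mathbb{R}^3$ and $J^1[0,1]=[0,1]\times\mathbb{R}^2$ carry contact form $dz-y\,dx$; Legendrian curves are represented by front projections to the $(x,z)$-plane. A left (resp. right) cusp has both branches leaving to the right (resp. left). Tangles. A Legendrian $n$-tangle is a compact Legendrian $\alpha\subset J^1[0,1]$ with boundary on $\partial J^1[0,1]$ whose front coincides near $x=0,1$ with the lines $z=i$, $1\le i\le n$, up to Legendrian isotopy fixed near the boundary; strands over a generic $x$ are numbered from top to bottom. $\alpha\cdot\beta$ places $\beta$ to the left of $\alpha$. For $\beta\in S_p$ the positive permutation braid $\beta$ is the cusp-free $p$-tangle joining left endpoint $i$ to right endpoint $\beta(i)$ with exactly one crossing between strands starting at $i<j$ iff $\beta(i)>\beta(j)$. $\sigma_i$ is the braid of $(i\ i{+}1)$; $e_i$ consists of horizontal strands at heights $j\ne i,i+1$ plus a right cusp joining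 left endpoints $i,i+1$ and a left cusp joining right endpoints $i,i+1$. $\mathcal{R}=\mathbb{Z}[s^{\pm1}]$ localized at all $s^k-s^{-k}$, $z=s-s^{-1}$; $\mathcal{R}\mathfrak{Leg}_n$ is the free $\mathcal{R}$-module on isotopy classes of $n$-tangles with bilinear product. $\alpha_{2,m}=e_{m-1}$ and $\alpha_{k,m}=\sigma_{m-k+1}\alpha_{k-1,m}\sigma_{m-k+1}-z\sigma_{m-k+1}\alpha_{k-1,m}-z\alpha_{k-1,m}\sigma_{m-k+1}+z^2\alpha_{k-1,m}$ for $3\le k\le m$. Normal rulings: a set of switch crossings plus, at each generic $x$, a fixed-point-free pairing of strands, locally constant, pairing the two strands at each cusp, never pairing the two strands of a crossing immediately beside it, with partners following strands through non-switch crossings and staying with heights at switches, and with the normality condition that at each switch the two pairs involved span nested or disjoint height intervals on both sides. $j(\rho)=\#\text{switches}-\#\text{right cusps}$. Satellite $S(K,\eta)$ of an $n$-tangle $\eta$: the $n$-copy of $K$'s front (copies shifted by distinct small amounts in $z$) with the $n$ parallel strands replaced, inside a small rectangle $J$ around an arc where $K$ is oriented left-to-right, by a rescaled front of $\eta$. A normal ruling of $S(K,\eta)$ is $k$-reduced if at the right boundary of $J$ none of the top $k$ strands of $\eta$ are paired with one another; $\widetilde R^{(k)}_{(K,\eta)}=\sum_{\rho\ k\text{-reduced}}z^{j(\rho)}$. For a location $*$ inside $J$ at an $x$-value with no crossings or cusps of $\eta$, $\rho$ is $(k,m)$-paired at $*$ if $\rho$ is $(m-1)$-reduced and pairs strand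 $k$ with strand $m$ of $\eta$ at $*$ (strands numbered top to bottom at $*$); $R^{\tau(k,m)}_{( *;K,\eta)}=\sum_{\rho\ (k,m)\text{-paired at }*}z^{j(\rho)}$. These polynomials extend linearly to $\eta\in\mathcal{R}\mathfrak{Leg}_n$. *)

theory Defs
  imports "HOL-Computational_Algebra.Polynomial" "HOL-Computational_Algebra.Fraction_Field"
begin

text \<open>We work in the fraction field Q(s) = Frac(Z[s]) of int polynomials; the ring
 R = Z[s^(+-1)] localized at all s^k - s^(-k) is the subring described by in_R.\<close>

type_synonym rf = "int poly fract"

definition svar :: rf where "svar = Fract [:0, 1:] 1"

definition zz :: rf where "zz = svar - inverse svar"

definition in_R :: "rf \<Rightarrow> bool" where
  "in_R c \<longleftrightarrow> (\<exists>(a::int poly) (e::nat) (ks::nat list). (\<forall>k\<in>set ks. 0 < k) \<and>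
      c = Fract a 1 / (svar ^ e * prod_list (map (\<lambda>k. svar ^ k - inverse svar ^ k) ks)))"

section \<open>Generic fronts as words of elementary pieces (read left to right)\<close>

text \<open>Strands at a generic x are numbered 0,1,2,... from top to bottom.
 Cr i: crossing of strands i and i+1.
 LC i: a left cusp (branches leaving to the right) creating new strands at positions i, i+1.
 RC i: a right cusp (branches leaving to the left) ending the strands at positions i, i+1.\<close>

datatype piece = Cr nat | LC nat | RC nat

fun cnt_after :: "nat \<Rightarrow> piece \<Rightarrow> nat" where
  "cnt_after c (Cr i) = c"
| "cnt_after c (LC i) = c + 2"
| "cnt_after c (RC i) = c - 2"

fun piece_ok :: "nat \<Rightarrow> piece \<Rightarrow> bool" where
  "piece_ok c (Cr i) = (i + 1 < c)"
| "piece_ok c (LC i) = (i \<le> c)"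
| "piece_ok c (RC i) = (i + 1 < c)"

text \<open>number of strands at position k (i.e. just before piece k), starting with c strands\<close>
definition cntf :: "nat \<Rightarrow> piece list \<Rightarrow> nat \<Rightarrow> nat" where
  "cntf c w k = foldl cnt_after c (take k w)"

definition valid_front :: "nat \<Rightarrow> piece list \<Rightarrow> nat \<Rightarrow> bool" where
  "valid_front c w c' \<longleftrightarrow> (\<forall>k<length w. piece_ok (cntf c w k) (w ! k)) \<and> cntf c w (length w) = c'"

definition tr :: "nat \<Rightarrow> nat \<Rightarrow> nat" where
  "tr i j = (if j = i then i + 1 else if j = i + 1 then i else j)"

definition up :: "nat \<Rightarrow> nat \<Rightarrow> nat" where
  "up i j = (if j < i then j else j + 2)"

definition down :: "nat \<Rightarrow> nat \<Rightarrow> nat" where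
  "down i j = (if j < i then j else j - 2)"

text \<open>where a strand at height j just left of a piece continues just right of it\<close>
fun thr :: "piece \<Rightarrow> nat \<Rightarrow> nat option" where
  "thr (Cr i) j = Some (tr i j)"
| "thr (LC i) j = Some (up i j)"
| "thr (RC i) j = (if j = i \<or> j = i + 1 then None else Some (down i j))"

definition seg :: "piece list \<Rightarrow> nat \<times> nat \<Rightarrow> bool" where
  "seg w a \<longleftrightarrow> fst a \<le> length w \<and> snd a < cntf 0 w (fst a)"

definition fedge :: "piece list \<Rightarrow> nat \<times> nat \<Rightarrow> nat \<times> nat \<Rightarrow> bool" where
  "fedge w a b \<longleftrightarrow>
     (\<exists>k j j'. a = (k, j) \<and> b = (Suc k, j') \<and> k < length w \<and> j < cntf 0 w k \<and> thr (w ! k) j = Some j')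
   \<or> (\<exists>k i. k < length w \<and> w ! k = LC i \<and> a = (Suc k, i) \<and> b = (Suc k, i + 1))
   \<or> (\<exists>k i. k < length w \<and> w ! k = RC i \<and> a = (k, i) \<and> b = (k, i + 1))"

definition connected_front :: "piece list \<Rightarrow> bool" where
  "connected_front w \<longleftrightarrow> (\<forall>a b. seg w a \<and> seg w b \<longrightarrow> (\<lambda>x y. fedge w x y \<or> fedge w y x)\<^sup>*\<^sup>* a b)"

definition legendrian_knot_front :: "piece list \<Rightarrow> bool" where
  "legendrian_knot_front w \<longleftrightarrow> valid_front 0 w 0 \<and> connected_front w"

text \<open>ori k j = True means: at position k the strand at height j is oriented left-to-right\<close>
definition orientation_ok :: "piece list \<Rightarrow> (nat \<Rightarrow> nat \<Rightarrow> bool) \<Rightarrow> bool" where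
  "orientation_ok w ori \<longleftrightarrow> (\<forall>k<length w.
      (\<forall>j<cntf 0 w k. case thr (w ! k) j of Some j' \<Rightarrow> ori (Suc k) j' = ori k j | None \<Rightarrow> True) \<and>
      (case w ! k of LC i \<Rightarrow> ori (Suc k) i \<noteq> ori (Suc k) (i + 1)
                   | RC i \<Rightarrow> ori k i \<noteq> ori k (i + 1)
                   | Cr i \<Rightarrow> True))"

definition pairing_ok :: "nat \<Rightarrow> (nat \<Rightarrow> nat) \<Rightarrow> bool" where
  "pairing_ok c Q \<longleftrightarrow> (\<forall>j<c. Q j < c \<and> Q j \<noteq> j \<and> Q (Q j) = j) \<and> (\<forall>j. c \<le> j \<longrightarrow> Q j = j)"

definition hint :: "(nat \<Rightarrow> nat) \<Rightarrow> nat \<Rightarrow> nat set" where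
  "hint Q a = {min a (Q a) .. max a (Q a)}"

definition normal_at :: "nat \<Rightarrow> (nat \<Rightarrow> nat) \<Rightarrow> bool" where
  "normal_at i Q \<longleftrightarrow> hint Q i \<subseteq> hint Q (i + 1) \<or> hint Q (i + 1) \<subseteq> hint Q i
                     \<or> hint Q i \<inter> hint Q (i + 1) = {}"

fun is_Cr :: "piece \<Rightarrow> bool" where
  "is_Cr (Cr i) = True" | "is_Cr _ = False"

fun is_RC :: "piece \<Rightarrow> bool" where
  "is_RC (RC i) = True" | "is_RC _ = False"

text \<open>A normal ruling: a set Sw of switched crossings (indices into the word) and the
 pairings P k at each position k = 0..length w (P k = id beyond length w).\<close>
definition ruling_step :: "piece \<Rightarrow> bool \<Rightarrow> (nat \<Rightarrow> nat) \<Rightarrow> (nat \<Rightarrow> nat) \<Rightarrow> bool" where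
  "ruling_step pc sw Q Q' \<longleftrightarrow> (case pc of
      Cr i \<Rightarrow> Q i \<noteq> i + 1 \<and>
              (if sw then Q' = Q \<and> normal_at i Q else Q' = tr i \<circ> Q \<circ> tr i)
    | LC i \<Rightarrow> Q' = (\<lambda>j. if j = i then i + 1 else if j = i + 1 then i else up i (Q (down i j)))
    | RC i \<Rightarrow> Q i = i + 1 \<and> Q' = (\<lambda>j. down i (Q (up i j))))"

definition rulings :: "piece list \<Rightarrow> (nat set \<times> (nat \<Rightarrow> nat \<Rightarrow> nat)) set" where
  "rulings w = {(Sw, P).
      Sw \<subseteq> {k. k < length w \<and> is_Cr (w ! k)} \<and>
      (\<forall>k\<le>length w. pairing_ok (cntf 0 w k) (P k)) \<and>
      (\<forall>k>length w. P k = id) \<and>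
      (\<forall>k<length w. ruling_step (w ! k) (k \<in> Sw) (P k) (P (Suc k)))}"

definition jr :: "piece list \<Rightarrow> nat set \<times> (nat \<Rightarrow> nat \<Rightarrow> nat) \<Rightarrow> int" where
  "jr w \<rho> = int (card (fst \<rho>)) - int (length (filter is_RC w))"

definition ncopy_piece :: "nat \<Rightarrow> piece \<Rightarrow> piece list" where
  "ncopy_piece n pc = (case pc of
      Cr i \<Rightarrow> concat (map (\<lambda>t. map (\<lambda>r. Cr (n * i + t + r)) [0..<n]) (rev [0..<n]))
    | LC i \<Rightarrow> map (\<lambda>t. LC (n * i + 2 * t)) [0..<n] @
              concat (map (\<lambda>u. map (\<lambda>r. Cr (n * i + 2 * u - 1 - r)) [0..<u]) [1..<n])
    | RC i \<Rightarrow> rev (concat (map (\<lambda>u. map (\<lambda>r. Cr (n * i + 2 * u - 1 - r)) [0..<u]) [1..<n])) @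
              map (\<lambda>t. RC (n * i + 2 * (n - 1 - t))) [0..<n])"

definition ncopy :: "nat \<Rightarrow> piece list \<Rightarrow> piece list" where
  "ncopy n w = concat (map (ncopy_piece n) w)"

fun shiftp :: "nat \<Rightarrow> piece \<Rightarrow> piece" where
  "shiftp b (Cr i) = Cr (b + i)" | "shiftp b (LC i) = LC (b + i)" | "shiftp b (RC i) = RC (b + i)"

text \<open>Satellite S(K, eta): K given by front word wK, the rectangle J placed at position p
 around the strand at height s (which must be oriented left-to-right); eta an n-tangle word.\<close>
definition sat :: "nat \<Rightarrow> piece list \<Rightarrow> nat \<Rightarrow> nat \<Rightarrow> piece list \<Rightarrow> piece list" where
  "sat n wK p s eta = ncopy n (take p wK) @ map (shiftp (n * s)) eta @ ncopy n (drop p wK)"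

text \<open>none of the top k strands of eta (block starting at height b) are paired together at position q\<close>
definition reduced_at :: "nat \<Rightarrow> nat \<Rightarrow> nat \<Rightarrow> nat set \<times> (nat \<Rightarrow> nat \<Rightarrow> nat) \<Rightarrow> bool" where
  "reduced_at q b k \<rho> \<longleftrightarrow> (\<forall>a<k. \<forall>c<k. snd \<rho> q (b + a) \<noteq> b + c)"

definition Rtilde :: "nat \<Rightarrow> piece list \<Rightarrow> nat \<Rightarrow> nat \<Rightarrow> nat \<Rightarrow> piece list \<Rightarrow> rf" where
  "Rtilde n wK p s k eta =
     (let W = sat n wK p s eta; q = length (ncopy n (take p wK)) + length eta in
      \<Sum>\<rho>\<in>{\<rho>\<in>rulings W. reduced_at q (n * s) k \<rho>}. zz powi jr W \<rho>)"

text \<open>R^{tau(k,m)}_{(*;K,eta)} with * located after the first ell pieces of eta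
 (strands numbered 1..n from the top).\<close>
definition Rtau :: "nat \<Rightarrow> piece list \<Rightarrow> nat \<Rightarrow> nat \<Rightarrow> nat \<Rightarrow> nat \<Rightarrow> nat \<Rightarrow> piece list \<Rightarrow> rf" where
  "Rtau n wK p s k m ell eta =
     (let W = sat n wK p s eta; q = length (ncopy n (take p wK)) + length eta;
          qs = length (ncopy n (take p wK)) + ell in
      \<Sum>\<rho>\<in>{\<rho>\<in>rulings W. reduced_at q (n * s) (m - 1) \<rho> \<and>
                          snd \<rho> qs (n * s + (k - 1)) = n * s + (m - 1)}. zz powi jr W \<rho>)"

type_synonym combo = "(rf \<times> piece list) list"

text \<open>tmul A B is the product A.B, i.e. B placed to the LEFT of A (words read left to right)\<close>
definition tmul :: "combo \<Rightarrow> combo \<Rightarrow> combo" where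
  "tmul A B = concat (map (\<lambda>(a, wa). map (\<lambda>(b, wb). (a * b, wb @ wa)) B) A)"

definition cscale :: "rf \<Rightarrow> combo \<Rightarrow> combo" where
  "cscale c A = map (\<lambda>(a, w). (c * a, w)) A"

text \<open>alpha_aux j m = alpha_{j+2,m}; sigma_{m-k+1} is Cr (m-k) in 0-based indexing\<close>
primrec alpha_aux :: "nat \<Rightarrow> nat \<Rightarrow> combo" where
  "alpha_aux 0 m = [(1, [RC (m - 2), LC (m - 2)])]"
| "alpha_aux (Suc j) m =
     (let S = [(1, [Cr (m - (j + 3))])]; A = alpha_aux j m in
      tmul (tmul S A) S @ cscale (- zz) (tmul S A) @ cscale (- zz) (tmul A S) @ cscale (zz ^ 2) A)"

definition alpha :: "nat \<Rightarrow> nat \<Rightarrow> combo" where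
  "alpha k m = alpha_aux (k - 2) m"

definition Rtilde_lin :: "nat \<Rightarrow> piece list \<Rightarrow> nat \<Rightarrow> nat \<Rightarrow> nat \<Rightarrow> combo \<Rightarrow> rf" where
  "Rtilde_lin n wK p s k A = sum_list (map (\<lambda>(c, w). c * Rtilde n wK p s k w) A)"

fun braid_pairs :: "nat list \<Rightarrow> piece list \<Rightarrow> nat set list" where
  "braid_pairs l [] = []"
| "braid_pairs l (Cr i # w) = {l ! i, l ! (i + 1)} # braid_pairs (l[i := l ! (i + 1), i + 1 := l ! i]) w"
| "braid_pairs l (_ # w) = []"

text \<open>w is a word for a positive permutation braid on the top p strands: only crossings
 among the top p strands, and any two strands cross at most once.\<close>
definition pos_perm_braid :: "nat \<Rightarrow> piece list \<Rightarrow> bool" where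
  "pos_perm_braid p w \<longleftrightarrow> (\<forall>x\<in>set w. \<exists>i. x = Cr i \<and> i + 1 < p) \<and> distinct (braid_pairs [0..<p] w)"

end

theory Submission
  imports Defs
begin

text \<open>Normal rulings are enumerated from left to right: the pairing just right of a crossing or a cusp
  is determined by the pairing left of it and, at a crossing, by whether the crossing is a switch. Ruling
  polynomials with conditions on the pairings at finitely many places therefore become iterated state sums
  over pairings that are linear in their continuation, and the satellite of the product splits into the
  part of K left of J, the tangle nu, alpha_{k,m}, the braid beta and the part of K right of J.

  The key identity: if a continuation H vanishes on every pairing that pairs two of the top m - 1 strands
  of the tangle with each other, then z times the state sum through alpha_{k,m} starting from Q is H(Q)
  when Q pairs strand m - k + 1 with strand m, and 0 otherwise. It follows by induction on k from the
  recursion defining alpha_{k,m}; the summands with a non-normal switch would spoil it, but they pair two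
  top strands and so contribute nothing. The braid beta only crosses the top m - 1 strands, so it
  preserves the property of pairing two of them with each other, and (m - 1)-reducedness to the right of
  beta discards exactly such pairings.\<close>

section \<open>Moves of pairings across crossings and cusps\<close>

definition cr_pairing :: "nat \<Rightarrow> (nat \<Rightarrow> nat) \<Rightarrow> nat \<Rightarrow> nat" where
  "cr_pairing i Q = tr i \<circ> Q \<circ> tr i"

definition lc_pairing :: "nat \<Rightarrow> (nat \<Rightarrow> nat) \<Rightarrow> nat \<Rightarrow> nat" where
  "lc_pairing i Q = (\<lambda>j. if j = i then i + 1 else if j = i + 1 then i else up i (Q (down i j)))"

definition rc_pairing :: "nat \<Rightarrow> (nat \<Rightarrow> nat) \<Rightarrow> nat \<Rightarrow> nat" where
  "rc_pairing i Q = (\<lambda>j. down i (Q (up i j)))"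

lemma ruling_step_simps:
  "ruling_step (Cr i) sw Q Q' \<longleftrightarrow>
     Q i \<noteq> i + 1 \<and> (if sw then Q' = Q \<and> normal_at i Q else Q' = cr_pairing i Q)"
  "ruling_step (LC i) sw Q Q' \<longleftrightarrow> Q' = lc_pairing i Q"
  "ruling_step (RC i) sw Q Q' \<longleftrightarrow> Q i = i + 1 \<and> Q' = rc_pairing i Q"
  unfolding ruling_step_def cr_pairing_def lc_pairing_def rc_pairing_def by simp_all

lemma pairing_ok_involution: "pairing_ok c Q \<Longrightarrow> Q (Q j) = j"
  unfolding pairing_ok_def by (cases "j < c") auto

lemma pairing_ok_0_iff: "pairing_ok 0 Q \<longleftrightarrow> Q = id"
  unfolding pairing_ok_def by (auto simp: fun_eq_iff)

lemma tr_tr [simp]: "tr i (tr i j) = j"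
  unfolding tr_def by auto

lemma cr_pairing_apply: "cr_pairing i Q j = tr i (Q (tr i j))"
  unfolding cr_pairing_def by simp

lemma cr_pairing_cr_pairing [simp]: "cr_pairing i (cr_pairing i Q) = Q"
  by (simp add: fun_eq_iff cr_pairing_apply)

lemma pairing_ok_cr_pairing:
  assumes Q: "pairing_ok c Q" and i: "i + 1 < c"
  shows "pairing_ok c (cr_pairing i Q)"
  unfolding pairing_ok_def cr_pairing_apply
proof (intro conjI allI impI)
  have tr_lt: "tr i j < c" if "j < c" for j using that i unfolding tr_def by auto
  fix j assume j: "j < c"
  then have Qj: "Q (tr i j) < c" "Q (tr i j) \<noteq> tr i j" using Q tr_lt unfolding pairing_ok_def by auto
  show "tr i (Q (tr i j)) < c" using tr_lt Qj(1) .
  show "tr i (Q (tr i j)) \<noteq> j" using Qj(2) tr_tr by metis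
  show "tr i (Q (tr i (tr i (Q (tr i j))))) = j" by (simp add: pairing_ok_involution[OF Q])
next
  fix j assume "c \<le> j"
  moreover have "tr i j = j" if "c \<le> j" for j using that i unfolding tr_def by auto
  ultimately show "tr i (Q (tr i j)) = j" using Q unfolding pairing_ok_def by auto
qed

lemma
  assumes Q: "pairing_ok c Q" and cusp: "Q i = i + 1"
  shows pairing_ok_rc_pairing: "pairing_ok (c - 2) (rc_pairing i Q)"
    and lc_pairing_rc_pairing: "lc_pairing i (rc_pairing i Q) = Q"
proof -
  have inv: "Q (Q j) = j" for j using pairing_ok_involution[OF Q] .
  have cusp': "Q (i + 1) = i" using inv cusp by metis
  have ic: "i + 1 < c"
  proof (rule ccontr)
    assume "\<not> i + 1 < c"
    then have "Q (i + 1) = i + 1" using Q unfolding pairing_ok_def by auto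
    with cusp' show False by simp
  qed
  have off_cusp: "Q j \<noteq> i \<and> Q j \<noteq> i + 1" if "j \<noteq> i" "j \<noteq> i + 1" for j
    using that inv cusp cusp' by metis
  show "pairing_ok (c - 2) (rc_pairing i Q)"
    unfolding pairing_ok_def rc_pairing_def
  proof (intro conjI allI impI)
    fix j assume j: "j < c - 2"
    have u: "up i j \<noteq> i" "up i j \<noteq> i + 1" "up i j < c" using j ic unfolding up_def by auto
    have v: "Q (up i j) \<noteq> i" "Q (up i j) \<noteq> i + 1" "Q (up i j) < c" "Q (up i j) \<noteq> up i j"
      using off_cusp[OF u(1,2)] Q u(3) unfolding pairing_ok_def by auto
    show "down i (Q (up i j)) < c - 2" using v ic unfolding down_def by auto
    show "down i (Q (up i j)) \<noteq> j" using v u unfolding down_def up_def by (auto split: if_splits)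
    have "up i (down i (Q (up i j))) = Q (up i j)" using v unfolding up_def down_def by auto
    then show "down i (Q (up i (down i (Q (up i j))))) = j"
      by (simp add: inv) (simp add: up_def down_def)
  next
    fix j assume j: "c - 2 \<le> j"
    then have "up i j = j + 2" "Q (j + 2) = j + 2" using Q ic unfolding up_def pairing_ok_def by auto
    then show "down i (Q (up i j)) = j" using ic j unfolding down_def by auto
  qed
  show "lc_pairing i (rc_pairing i Q) = Q"
  proof
    fix j
    show "lc_pairing i (rc_pairing i Q) j = Q j"
    proof (cases "j = i \<or> j = i + 1")
      case True
      then show ?thesis using cusp cusp' unfolding lc_pairing_def by auto
    next
      case False
      then have "up i (down i j) = j" "up i (down i (Q j)) = Q j"
        using off_cusp[of j] unfolding up_def down_def by auto
      with False show ?thesis unfolding lc_pairing_def rc_pairing_def by auto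
    qed
  qed
qed

section \<open>State sums over pairings\<close>

lemma zz_nonzero: "zz \<noteq> 0"
proof
  assume "zz = 0"
  then have "svar = inverse svar" unfolding zz_def by simp
  moreover have "svar \<noteq> 0" unfolding svar_def by (simp add: eq_fract Zero_fract_def)
  ultimately have "svar * svar = 1" by (metis right_inverse)
  moreover have "svar * svar = Fract [:0, 0, 1:] 1" unfolding svar_def by simp
  ultimately have "[:0, 0, 1::int:] = 1" by (simp add: eq_fract One_fract_def)
  then have "coeff [:0, 0, 1::int:] 0 = coeff 1 0" by simp
  then show False by simp
qed

fun step_sum :: "nat \<Rightarrow> piece \<Rightarrow> (nat \<Rightarrow> nat) \<Rightarrow> ((nat \<Rightarrow> nat) \<Rightarrow> rf) \<Rightarrow> rf" where
  "step_sum c (Cr i) Q F = (if Q i \<noteq> i + 1 then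
      (if normal_at i Q then zz * F Q else 0) +
      (if pairing_ok c (cr_pairing i Q) then F (cr_pairing i Q) else 0) else 0)"
| "step_sum c (LC i) Q F = (if pairing_ok (c + 2) (lc_pairing i Q) then F (lc_pairing i Q) else 0)"
| "step_sum c (RC i) Q F =
     (if Q i = i + 1 \<and> pairing_ok (c - 2) (rc_pairing i Q) then inverse zz * F (rc_pairing i Q) else 0)"

fun state_sum :: "nat \<Rightarrow> piece list \<Rightarrow> (nat \<Rightarrow> nat) \<Rightarrow> ((nat \<Rightarrow> nat) \<Rightarrow> rf) \<Rightarrow> rf" where
  "state_sum c [] Q H = H Q"
| "state_sum c (pc # w) Q H = step_sum c pc Q (\<lambda>Q'. state_sum (cnt_after c pc) w Q' H)"

fun weighted_state_sum ::
  "nat \<Rightarrow> piece list \<Rightarrow> (nat \<Rightarrow> nat) \<Rightarrow> (nat \<Rightarrow> (nat \<Rightarrow> nat) \<Rightarrow> rf) \<Rightarrow> rf" where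
  "weighted_state_sum c [] Q g = g 0 Q"
| "weighted_state_sum c (pc # w) Q g =
     g 0 Q * step_sum c pc Q (\<lambda>Q'. weighted_state_sum (cnt_after c pc) w Q' (\<lambda>k. g (Suc k)))"

lemma step_sum_cong:
  assumes "pairing_ok c Q" "\<And>Q'. pairing_ok (cnt_after c pc) Q' \<Longrightarrow> F Q' = F' Q'"
  shows "step_sum c pc Q F = step_sum c pc Q F'"
  using assms by (cases pc) auto

lemma step_sum_add: "step_sum c pc Q (\<lambda>Q'. F Q' + G Q') = step_sum c pc Q F + step_sum c pc Q G"
  by (cases pc) (auto simp: algebra_simps)

lemma step_sum_mult: "step_sum c pc Q (\<lambda>Q'. a * F Q') = a * step_sum c pc Q F"
  by (cases pc) (auto simp: algebra_simps)

lemma step_sum_zero: "step_sum c pc Q (\<lambda>Q'. 0) = 0"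
  by (cases pc) auto

lemma state_sum_append:
  "state_sum c (u @ v) Q H = state_sum c u Q (\<lambda>Q'. state_sum (foldl cnt_after c u) v Q' H)"
  by (induction u arbitrary: c Q) auto

lemma state_sum_cong:
  assumes "pairing_ok c Q" "\<And>Q'. pairing_ok (foldl cnt_after c w) Q' \<Longrightarrow> H Q' = H' Q'"
  shows "state_sum c w Q H = state_sum c w Q H'"
  using assms by (induction w arbitrary: c Q) (auto intro: step_sum_cong)

lemma state_sum_add: "state_sum c w Q (\<lambda>Q'. F Q' + G Q') = state_sum c w Q F + state_sum c w Q G"
  by (induction w arbitrary: c Q) (auto simp: step_sum_add)

lemma state_sum_mult: "state_sum c w Q (\<lambda>Q'. a * F Q') = a * state_sum c w Q F"
  by (induction w arbitrary: c Q) (auto simp: step_sum_mult)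

lemma state_sum_zero: "state_sum c w Q (\<lambda>Q'. 0) = 0"
  by (induction w arbitrary: c Q) (auto simp: step_sum_zero)

lemma state_sum_sum_list:
  "state_sum c w Q (\<lambda>Q'. \<Sum>(a, v)\<leftarrow>xs. a * F v Q') = (\<Sum>(a, v)\<leftarrow>xs. a * state_sum c w Q (F v))"
  by (induction xs) (auto simp: state_sum_add state_sum_mult state_sum_zero)

lemma weighted_state_sum_append:
  assumes "\<forall>k<length u. \<forall>Q. g k Q = 1"
  shows "weighted_state_sum c (u @ v) Q g =
    state_sum c u Q (\<lambda>Q'. weighted_state_sum (foldl cnt_after c u) v Q' (\<lambda>j. g (length u + j)))"
  using assms by (induction u arbitrary: c Q g) auto

lemma weighted_state_sum_factor:
  "weighted_state_sum c w Q (\<lambda>j Q'. (if j = 0 then r Q' else 1) * h j Q') = r Q * weighted_state_sum c w Q h"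
  by (cases w) (simp_all add: mult.assoc)

lemma weighted_state_sum_single_weight:
  "weighted_state_sum c (u @ v) Q (\<lambda>j Q'. if j = length u then r Q' else 1) =
    state_sum c u Q (\<lambda>Q'. r Q' * weighted_state_sum (foldl cnt_after c u) v Q' (\<lambda>_ _. 1))"
proof -
  have "weighted_state_sum c (u @ v) Q (\<lambda>j Q'. if j = length u then r Q' else 1) =
      state_sum c u Q (\<lambda>Q'. weighted_state_sum (foldl cnt_after c u) v Q'
        (\<lambda>j Q''. if length u + j = length u then r Q'' else 1))"
    by (rule weighted_state_sum_append) simp
  also have "(\<lambda>j Q''. if length u + j = length u then r Q'' else 1) = (\<lambda>j Q''. (if j = 0 then r Q'' else 1) * 1)"
    by auto
  finally show ?thesis by (simp only: weighted_state_sum_factor)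
qed

lemma cntf_0 [simp]: "cntf c w 0 = c"
  unfolding cntf_def by simp

lemma cntf_Suc [simp]: "cntf c (pc # w) (Suc k) = cntf (cnt_after c pc) w k"
  unfolding cntf_def by simp

lemma cnt_after_shiftp [simp]: "cnt_after c (shiftp b pc) = cnt_after c pc"
  by (cases pc) auto

lemma foldl_cnt_after_shiftp [simp]: "foldl cnt_after c (map (shiftp b) w) = foldl cnt_after c w"
  by (induction w arbitrary: c) auto

lemma foldl_cnt_after_crossings: "\<forall>x\<in>set w. is_Cr x \<Longrightarrow> foldl cnt_after c w = c"
proof (induction w arbitrary: c)
  case (Cons x w)
  then show ?case by (cases x) auto
qed simp

lemma foldl_cnt_after_LCs: "foldl cnt_after c (map (\<lambda>t. LC (f t)) xs) = c + 2 * length xs"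
  by (induction xs arbitrary: c) auto

lemma foldl_cnt_after_RCs: "foldl cnt_after c (map (\<lambda>t. RC (f t)) xs) = c - 2 * length xs"
  by (induction xs arbitrary: c) auto

lemma pieces_ok_Cons:
  assumes "\<forall>k<length (pc # w). piece_ok (cntf c (pc # w) k) ((pc # w) ! k)"
  shows "piece_ok c pc" "\<forall>k<length w. piece_ok (cntf (cnt_after c pc) w k) (w ! k)"
  using assms[rule_format, of 0] assms[rule_format, of "Suc _"] by auto

lemma foldl_cnt_after_ncopy_piece:
  assumes "piece_ok c pc"
  shows "foldl cnt_after (n * c) (ncopy_piece n pc) = n * cnt_after c pc"
proof (cases pc)
  case (Cr i)
  then show ?thesis unfolding ncopy_piece_def by (simp add: foldl_cnt_after_crossings)
next
  case (LC i)
  then show ?thesis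
    unfolding ncopy_piece_def
    by (simp add: foldl_cnt_after_LCs foldl_cnt_after_crossings algebra_simps)
next
  case (RC i)
  then have "2 \<le> c" using assms by simp
  with RC show ?thesis
    unfolding ncopy_piece_def
    by (simp add: foldl_cnt_after_RCs foldl_cnt_after_crossings diff_mult_distrib2)
qed

lemma foldl_cnt_after_ncopy:
  "\<forall>k<length w. piece_ok (cntf c w k) (w ! k) \<Longrightarrow>
    foldl cnt_after (n * c) (ncopy n w) = n * foldl cnt_after c w"
proof (induction w arbitrary: c)
  case Nil
  then show ?case by (simp add: ncopy_def)
next
  case (Cons pc w)
  with pieces_ok_Cons[OF Cons.prems] show ?case
    by (simp add: ncopy_def foldl_cnt_after_ncopy_piece)
qed

lemma foldl_cnt_after_add:
  "\<forall>k<length w. piece_ok (cntf c w k) (w ! k) \<Longrightarrow>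
    foldl cnt_after (c + d) w = foldl cnt_after c w + d"
proof (induction w arbitrary: c)
  case (Cons pc w)
  note ok = pieces_ok_Cons[OF Cons.prems]
  then have "cnt_after (c + d) pc = cnt_after c pc + d" by (cases pc) auto
  with Cons.IH[OF ok(2)] show ?case by simp
qed simp

lemma valid_front_foldl_cnt_after:
  "valid_front n w n \<Longrightarrow> n \<le> c \<Longrightarrow> foldl cnt_after c w = c"
  using foldl_cnt_after_add[of w n "c - n"] unfolding valid_front_def cntf_def by auto

definition count_preserving :: "piece list \<Rightarrow> bool" where
  "count_preserving w \<longleftrightarrow> (\<forall>c\<ge>2. foldl cnt_after c w = c)"

section \<open>Normal rulings as a state sum\<close>

definition rulings_from ::
  "nat \<Rightarrow> piece list \<Rightarrow> (nat \<Rightarrow> nat) \<Rightarrow> (nat set \<times> (nat \<Rightarrow> nat \<Rightarrow> nat)) set" where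
  "rulings_from c w Q = {(Sw, P).
      Sw \<subseteq> {k. k < length w \<and> is_Cr (w ! k)} \<and> P 0 = Q \<and>
      (\<forall>k\<le>length w. pairing_ok (cntf c w k) (P k)) \<and>
      (\<forall>k>length w. P k = id) \<and>
      (\<forall>k<length w. ruling_step (w ! k) (k \<in> Sw) (P k) (P (Suc k)))}"

definition ruling_steps :: "nat \<Rightarrow> piece \<Rightarrow> (nat \<Rightarrow> nat) \<Rightarrow> (bool \<times> (nat \<Rightarrow> nat)) set" where
  "ruling_steps c pc Q =
     {(sw, Q'). ruling_step pc sw Q Q' \<and> (sw \<longrightarrow> is_Cr pc) \<and> pairing_ok (cnt_after c pc) Q'}"

definition ruling_cons ::
  "bool \<Rightarrow> (nat \<Rightarrow> nat) \<Rightarrow> nat set \<times> (nat \<Rightarrow> nat \<Rightarrow> nat) \<Rightarrow> nat set \<times> (nat \<Rightarrow> nat \<Rightarrow> nat)" where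
  "ruling_cons sw Q \<rho> = ((if sw then insert 0 else id) (Suc ` fst \<rho>), case_nat Q (snd \<rho>))"

lemma rulings_eq_rulings_from: "rulings w = rulings_from 0 w id"
  unfolding rulings_def rulings_from_def by (force simp: pairing_ok_0_iff)

lemma rulings_from_Nil: "pairing_ok c Q \<Longrightarrow> rulings_from c [] Q = {({}, \<lambda>k. if k = 0 then Q else id)}"
  unfolding rulings_from_def by (auto simp: fun_eq_iff)

lemma rulings_from_Cons_iff:
  assumes "pairing_ok c Q"
  shows "(Sw, P) \<in> rulings_from c (pc # w) Q \<longleftrightarrow>
     P 0 = Q \<and> (0 \<in> Sw, P 1) \<in> ruling_steps c pc Q \<and>
     ({k. Suc k \<in> Sw}, P \<circ> Suc) \<in> rulings_from (cnt_after c pc) w (P 1)"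
proof -
  have all_le_Suc: "(\<forall>k\<le>Suc n. R k) \<longleftrightarrow> R 0 \<and> (\<forall>k\<le>n. R (Suc k))" for n R
    by (simp add: All_less_Suc2 flip: less_Suc_eq_le)
  have all_gt_Suc: "(\<forall>k>Suc n. R k) \<longleftrightarrow> (\<forall>k>n. R (Suc k))" for n R
    by (metis Suc_lessE Suc_less_eq)
  have sub: "Sw \<subseteq> {k. k < Suc (length w) \<and> is_Cr ((pc # w) ! k)} \<longleftrightarrow>
      (0 \<in> Sw \<longrightarrow> is_Cr pc) \<and> {k. Suc k \<in> Sw} \<subseteq> {k. k < length w \<and> is_Cr (w ! k)}"
    by (auto simp: subset_iff nth_Cons split: nat.splits)
  show ?thesis
    using assms unfolding rulings_from_def ruling_steps_def
    by (auto simp: all_le_Suc all_gt_Suc All_less_Suc2 sub)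
qed

lemma ruling_cons_simps:
  "0 \<in> fst (ruling_cons sw Q \<rho>) \<longleftrightarrow> sw"
  "{k. Suc k \<in> fst (ruling_cons sw Q \<rho>)} = fst \<rho>"
  "snd (ruling_cons sw Q \<rho>) 0 = Q"
  "snd (ruling_cons sw Q \<rho>) \<circ> Suc = snd \<rho>"
  unfolding ruling_cons_def by (auto simp: image_iff)

lemma ruling_cons_decompose:
  assumes "P 0 = Q"
  shows "(Sw, P) = ruling_cons (0 \<in> Sw) Q ({k. Suc k \<in> Sw}, P \<circ> Suc)"
proof -
  have Sw: "(if 0 \<in> Sw then insert 0 else id) (Suc ` {k. Suc k \<in> Sw}) = Sw"
  proof (rule set_eqI)
    show "x \<in> (if 0 \<in> Sw then insert 0 else id) (Suc ` {k. Suc k \<in> Sw}) \<longleftrightarrow> x \<in> Sw" for x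
      by (cases x) (auto simp: image_iff)
  qed
  have P: "case_nat Q (P \<circ> Suc) = P"
    using assms by (simp add: fun_eq_iff split: nat.split)
  show ?thesis unfolding ruling_cons_def fst_conv snd_conv Sw P ..
qed

lemma inj_ruling_cons: "inj (ruling_cons sw Q)"
proof (rule injI)
  fix \<rho>1 \<rho>2 assume eq: "ruling_cons sw Q \<rho>1 = ruling_cons sw Q \<rho>2"
  show "\<rho>1 = \<rho>2"
  proof (rule prod_eqI)
    have "fst \<rho>1 = {k. Suc k \<in> fst (ruling_cons sw Q \<rho>1)}" by (simp only: ruling_cons_simps)
    also have "\<dots> = fst \<rho>2" by (simp only: eq ruling_cons_simps)
    finally show "fst \<rho>1 = fst \<rho>2" .
    have "snd \<rho>1 = snd (ruling_cons sw Q \<rho>1) \<circ> Suc" by (simp only: ruling_cons_simps)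
    also have "\<dots> = snd \<rho>2" by (simp only: eq ruling_cons_simps)
    finally show "snd \<rho>1 = snd \<rho>2" .
  qed
qed

lemma rulings_from_Cons:
  assumes Q: "pairing_ok c Q"
  shows "rulings_from c (pc # w) Q =
    (\<Union>(sw, Q')\<in>ruling_steps c pc Q. ruling_cons sw Q ` rulings_from (cnt_after c pc) w Q')"
proof (intro equalityI subsetI)
  fix \<rho> assume \<rho>: "\<rho> \<in> rulings_from c (pc # w) Q"
  obtain Sw P where \<rho>_eq: "\<rho> = (Sw, P)" by fastforce
  have P0: "P 0 = Q" and step: "(0 \<in> Sw, P 1) \<in> ruling_steps c pc Q"
    and rest: "({k. Suc k \<in> Sw}, P \<circ> Suc) \<in> rulings_from (cnt_after c pc) w (P 1)"
    using \<rho> unfolding \<rho>_eq rulings_from_Cons_iff[OF Q] by auto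
  have "\<rho> = ruling_cons (0 \<in> Sw) Q ({k. Suc k \<in> Sw}, P \<circ> Suc)"
    unfolding \<rho>_eq using P0 by (rule ruling_cons_decompose)
  with step rest show "\<rho> \<in> (\<Union>(sw, Q')\<in>ruling_steps c pc Q. ruling_cons sw Q ` rulings_from (cnt_after c pc) w Q')"
    by blast
next
  fix \<rho> assume "\<rho> \<in> (\<Union>(sw, Q')\<in>ruling_steps c pc Q. ruling_cons sw Q ` rulings_from (cnt_after c pc) w Q')"
  then obtain sw Q' \<rho>' where step: "(sw, Q') \<in> ruling_steps c pc Q"
    and \<rho>': "\<rho>' \<in> rulings_from (cnt_after c pc) w Q'" and \<rho>: "\<rho> = ruling_cons sw Q \<rho>'"
    by auto
  have "snd \<rho> 1 = Q'" using \<rho>' unfolding \<rho> ruling_cons_def rulings_from_def by auto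
  with step \<rho>' have "(fst \<rho>, snd \<rho>) \<in> rulings_from c (pc # w) Q"
    unfolding rulings_from_Cons_iff[OF Q] \<rho> ruling_cons_simps by simp
  then show "\<rho> \<in> rulings_from c (pc # w) Q" by simp
qed

lemma ruling_steps_Cr:
  "pairing_ok c Q \<Longrightarrow> ruling_steps c (Cr i) Q =
     (if Q i \<noteq> i + 1 \<and> normal_at i Q then {(True, Q)} else {}) \<union>
     (if Q i \<noteq> i + 1 \<and> pairing_ok c (cr_pairing i Q) then {(False, cr_pairing i Q)} else {})"
  unfolding ruling_steps_def by (auto simp: ruling_step_simps)

lemma ruling_steps_LC:
  "ruling_steps c (LC i) Q = (if pairing_ok (c + 2) (lc_pairing i Q) then {(False, lc_pairing i Q)} else {})"
  unfolding ruling_steps_def by (auto simp: ruling_step_simps)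

lemma ruling_steps_RC:
  "ruling_steps c (RC i) Q =
     (if Q i = i + 1 \<and> pairing_ok (c - 2) (rc_pairing i Q) then {(False, rc_pairing i Q)} else {})"
  unfolding ruling_steps_def by (auto simp: ruling_step_simps)

lemma finite_ruling_steps: "pairing_ok c Q \<Longrightarrow> finite (ruling_steps c pc Q)"
  by (cases pc) (auto simp: ruling_steps_Cr ruling_steps_LC ruling_steps_RC)

lemma pairing_ok_ruling_steps: "(sw, Q') \<in> ruling_steps c pc Q \<Longrightarrow> pairing_ok (cnt_after c pc) Q'"
  unfolding ruling_steps_def by simp

lemma finite_rulings_from: "pairing_ok c Q \<Longrightarrow> finite (rulings_from c w Q)"
proof (induction w arbitrary: c Q)
  case Nil
  then show ?case by (simp add: rulings_from_Nil)
next
  case (Cons pc w)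
  then show ?case
    by (auto simp: rulings_from_Cons finite_ruling_steps intro: pairing_ok_ruling_steps)
qed

lemma finite_fst_rulings_from: "\<rho> \<in> rulings_from c w Q \<Longrightarrow> finite (fst \<rho>)"
  by (rule finite_subset[of _ "{..<length w}"]) (auto simp: rulings_from_def)

lemma ruling_cons_image_disjoint:
  assumes "(sw, Q1) \<noteq> (sw', Q2)"
  shows "ruling_cons sw Q ` rulings_from c w Q1 \<inter> ruling_cons sw' Q ` rulings_from c w Q2 = {}"
proof -
  have "(sw, Q1) = (sw', Q2)" if "\<rho>1 \<in> rulings_from c w Q1" "\<rho>2 \<in> rulings_from c w Q2"
    and "ruling_cons sw Q \<rho>1 = ruling_cons sw' Q \<rho>2" for \<rho>1 \<rho>2
    using that ruling_cons_simps(1,4)[of sw Q \<rho>1] ruling_cons_simps(1,4)[of sw' Q \<rho>2]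
    unfolding rulings_from_def by auto
  with assms show ?thesis by blast
qed

definition ruling_weight ::
  "piece list \<Rightarrow> (nat \<Rightarrow> (nat \<Rightarrow> nat) \<Rightarrow> rf) \<Rightarrow> nat set \<times> (nat \<Rightarrow> nat \<Rightarrow> nat) \<Rightarrow> rf" where
  "ruling_weight w g \<rho> = zz powi jr w \<rho> * (\<Prod>k\<le>length w. g k (snd \<rho> k))"

lemma ruling_weight_ruling_cons:
  assumes "finite (fst \<rho>)"
  shows "ruling_weight (pc # w) g (ruling_cons sw Q \<rho>) =
    g 0 Q * (if sw then zz else 1) * (if is_RC pc then inverse zz else 1) * ruling_weight w (\<lambda>k. g (Suc k)) \<rho>"
proof -
  have "card (fst (ruling_cons sw Q \<rho>)) = (if sw then 1 else 0) + card (fst \<rho>)"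
    using assms unfolding ruling_cons_def by (auto simp: card_image)
  then have "jr (pc # w) (ruling_cons sw Q \<rho>) =
      jr w \<rho> + ((if sw then 1 else 0) + (if is_RC pc then -1 else 0))"
    unfolding jr_def by auto
  then have "zz powi jr (pc # w) (ruling_cons sw Q \<rho>) =
      zz powi jr w \<rho> * (if sw then zz else 1) * (if is_RC pc then inverse zz else 1)"
    using zz_nonzero by (auto simp: power_int_add power_int_minus)
  moreover have "(\<Prod>k\<le>length (pc # w). g k (snd (ruling_cons sw Q \<rho>) k)) =
      g 0 Q * (\<Prod>k\<le>length w. g (Suc k) (snd \<rho> k))"
    unfolding length_Cons prod.atMost_Suc_shift ruling_cons_def by simp
  ultimately show ?thesis unfolding ruling_weight_def by (simp add: algebra_simps)
qed

lemma sum_rulings_from: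
  assumes "pairing_ok c Q"
  shows "(\<Sum>\<rho>\<in>rulings_from c w Q. ruling_weight w g \<rho>) = weighted_state_sum c w Q g"
  using assms
proof (induction w arbitrary: c Q g)
  case Nil
  then show ?case by (simp add: rulings_from_Nil ruling_weight_def jr_def)
next
  case (Cons pc w)
  let ?steps = "ruling_steps c pc Q"
  let ?R = "\<lambda>Q'. rulings_from (cnt_after c pc) w Q'"
  let ?sum = "\<lambda>sw Q'. g 0 Q * (if sw then zz else 1) * (if is_RC pc then inverse zz else 1) *
    weighted_state_sum (cnt_after c pc) w Q' (\<lambda>k. g (Suc k))"
  have "(\<Sum>\<rho>\<in>rulings_from c (pc # w) Q. ruling_weight (pc # w) g \<rho>) =
      (\<Sum>(sw, Q')\<in>?steps. \<Sum>\<rho>\<in>?R Q'. ruling_weight (pc # w) g (ruling_cons sw Q \<rho>))"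
    unfolding rulings_from_Cons[OF Cons.prems] split_def
    by (subst sum.UNION_disjoint)
      (auto simp: finite_ruling_steps[OF Cons.prems] finite_rulings_from pairing_ok_ruling_steps
        sum.reindex[OF inj_on_subset[OF inj_ruling_cons]] intro!: ruling_cons_image_disjoint)
  also have "\<dots> = (\<Sum>(sw, Q')\<in>?steps. ?sum sw Q')"
  proof (intro sum.cong refl, clarify)
    fix sw Q' assume "(sw, Q') \<in> ?steps"
    then have Q': "pairing_ok (cnt_after c pc) Q'" by (rule pairing_ok_ruling_steps)
    then show "(\<Sum>\<rho>\<in>?R Q'. ruling_weight (pc # w) g (ruling_cons sw Q \<rho>)) = ?sum sw Q'"
      by (simp add: ruling_weight_ruling_cons finite_fst_rulings_from Cons.IH[OF Q', symmetric]
          sum_distrib_left mult.assoc)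
  qed
  also have "\<dots> = weighted_state_sum c (pc # w) Q g"
  proof (cases pc)
    case (Cr i)
    have "sum f ((if A then {(True, Q)} else {}) \<union> (if B then {(False, Q')} else {})) =
        (if A then f (True, Q) else 0) + (if B then f (False, Q') else 0)" for f :: "_ \<Rightarrow> rf" and A B Q'
      by auto
    with Cr show ?thesis by (simp add: ruling_steps_Cr[OF Cons.prems] algebra_simps)
  qed (simp_all add: ruling_steps_LC ruling_steps_RC algebra_simps)
  finally show ?case .
qed

lemma sum_rulings_filter:
  "(\<Sum>\<rho>\<in>{\<rho>\<in>rulings w. \<forall>k\<le>length w. R k (snd \<rho> k)}. zz powi jr w \<rho>) =
    weighted_state_sum 0 w id (\<lambda>k Q. if R k Q then 1 else 0)"
proof -
  have indicator: "zz powi jr w \<rho> * (\<Prod>k\<le>length w. if R k (snd \<rho> k) then 1 else 0) =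
      (if \<forall>k\<le>length w. R k (snd \<rho> k) then zz powi jr w \<rho> else 0)" for \<rho>
    by (auto simp: prod.neutral)
  have id: "pairing_ok 0 id" by (simp add: pairing_ok_0_iff)
  show ?thesis
    unfolding rulings_eq_rulings_from sum.inter_filter[OF finite_rulings_from[OF id]]
      sum_rulings_from[OF id, symmetric] ruling_weight_def indicator
    by simp
qed

section \<open>The state sum through the tangles alpha k m\<close>

definition top_paired :: "nat \<Rightarrow> nat \<Rightarrow> (nat \<Rightarrow> nat) \<Rightarrow> bool" where
  "top_paired b m Q \<longleftrightarrow> (\<exists>x<m - 1. \<exists>y<m - 1. Q (b + x) = b + y)"

lemma top_paired_cr_pairing:
  assumes "b \<le> i" "i + 3 \<le> b + m" "top_paired b m Q"
  shows "top_paired b m (cr_pairing i Q)"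
proof -
  obtain x y where xy: "x < m - 1" "y < m - 1" "Q (b + x) = b + y"
    using assms(3) unfolding top_paired_def by blast
  define x' y' where "x' = tr i (b + x) - b" and "y' = tr i (b + y) - b"
  have "tr i (b + x) = b + x'" "x' < m - 1" "tr i (b + y) = b + y'" "y' < m - 1"
    using assms(1,2) xy(1,2) unfolding x'_def y'_def tr_def by auto
  moreover have "cr_pairing i Q (b + x') = b + y'"
    unfolding cr_pairing_apply using calculation xy(3) by (metis tr_tr)
  ultimately show ?thesis unfolding top_paired_def by blast
qed

text \<open>If i + 1 is paired with the bottom strand e of the block, a non-normal switch at i pairs i with a
  strand strictly between i + 1 and e, hence two of the top strands with each other.\<close>

lemma not_normal_at_top_paired:
  assumes "Q i \<noteq> i + 1" "Q (i + 1) = e" "i + 1 < e" "\<not> normal_at i Q" "b \<le> i" "e = b + m - 1"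
  shows "top_paired b m Q"
proof -
  have hint_i: "hint Q i = {min i (Q i) .. max i (Q i)}" unfolding hint_def by simp
  have hint_Suc: "hint Q (i + 1) = {i + 1 .. e}" unfolding hint_def using assms(2,3) by simp
  have "\<not> Q i \<le> i"
  proof
    assume "Q i \<le> i"
    then have "hint Q i \<inter> hint Q (i + 1) = {}" unfolding hint_i hint_Suc by auto
    with assms(4) show False unfolding normal_at_def by simp
  qed
  moreover have "\<not> e \<le> Q i"
  proof
    assume "e \<le> Q i"
    then have "hint Q (i + 1) \<subseteq> hint Q i" unfolding hint_i hint_Suc by auto
    with assms(4) show False unfolding normal_at_def by simp
  qed
  ultimately have "i - b < m - 1" "Q i - b < m - 1" "Q (b + (i - b)) = b + (Q i - b)"
    using assms(1,5,6) by auto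
  then show ?thesis unfolding top_paired_def by blast
qed

lemma state_sum_crossings_top_paired:
  assumes "\<forall>x\<in>set w. \<exists>i. x = Cr i \<and> b \<le> i \<and> i + 3 \<le> b + m"
    and "\<forall>Q'. top_paired b m Q' \<longrightarrow> H Q' = 0" and "top_paired b m Q"
  shows "state_sum c w Q H = 0"
  using assms
proof (induction w arbitrary: Q)
  case (Cons x w)
  then obtain i where i: "x = Cr i" "b \<le> i" "i + 3 \<le> b + m" by auto
  with Cons top_paired_cr_pairing[OF i(2,3) Cons.prems(3)] show ?case by simp
qed simp

lemma state_sum_crossing:
  assumes "pairing_ok c Q" "i + 1 < c"
  shows "state_sum c [Cr i] Q F =
    (if Q i \<noteq> i + 1 then (if normal_at i Q then zz * F Q else 0) + F (cr_pairing i Q) else 0)"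
  using assms pairing_ok_cr_pairing by simp

definition combo_state_sum ::
  "nat \<Rightarrow> nat \<Rightarrow> combo \<Rightarrow> (nat \<Rightarrow> nat) \<Rightarrow> ((nat \<Rightarrow> nat) \<Rightarrow> rf) \<Rightarrow> rf" where
  "combo_state_sum c b A Q H = (\<Sum>(a, w)\<leftarrow>A. a * state_sum c (map (shiftp b) w) Q H)"

lemma tmul_single_left: "tmul [(1, v)] A = map (\<lambda>(a, w). (a, w @ v)) A"
  unfolding tmul_def by (simp add: split_def)

lemma tmul_single_right: "tmul A [(1, v)] = map (\<lambda>(a, w). (a, v @ w)) A"
  unfolding tmul_def by (induction A) (auto simp: split_def)

lemma count_preserving_alpha_aux: "\<forall>x\<in>set (alpha_aux j m). count_preserving (snd x)"
proof (induction j)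
  case 0
  then show ?case unfolding count_preserving_def by auto
next
  case (Suc j)
  have "count_preserving (w @ [Cr i]) \<and> count_preserving (Cr i # w)" if "count_preserving w" for w i
    using that unfolding count_preserving_def by auto
  with Suc show ?case
    by (auto simp: Let_def tmul_single_left tmul_single_right cscale_def split: prod.splits)
qed

lemma combo_state_sum_append:
  "combo_state_sum c b (A @ B) Q H = combo_state_sum c b A Q H + combo_state_sum c b B Q H"
  unfolding combo_state_sum_def by simp

lemma combo_state_sum_cscale: "combo_state_sum c b (cscale a A) Q H = a * combo_state_sum c b A Q H"
  unfolding combo_state_sum_def cscale_def by (induction A) (auto simp: algebra_simps)

lemma combo_state_sum_crossing_after:
  assumes "\<forall>x\<in>set A. count_preserving (snd x)" "2 \<le> c"
  shows "combo_state_sum c b (tmul [(1, [Cr i])] A) Q H =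
    combo_state_sum c b A Q (\<lambda>Q'. state_sum c [Cr (b + i)] Q' H)"
  unfolding combo_state_sum_def tmul_single_left using assms
  by (induction A) (auto simp: state_sum_append count_preserving_def)

lemma combo_state_sum_crossing_before:
  "combo_state_sum c b (tmul A [(1, [Cr i])]) Q H =
    state_sum c [Cr (b + i)] Q (\<lambda>Q'. combo_state_sum c b A Q' H)"
  unfolding combo_state_sum_def tmul_single_right
  by (induction A) (auto simp: state_sum_add state_sum_mult state_sum_zero algebra_simps)

lemma combo_state_sum_alpha_aux_0:
  assumes "i + 2 = b + m" "2 \<le> m" "b + m \<le> c" "pairing_ok c Q"
  shows "zz * combo_state_sum c b (alpha_aux 0 m) Q H = (if Q i = i + 1 then H Q else 0)"
proof -
  have i: "b + (m - 2) = i" "c - 2 + 2 = c" using assms(1-3) by auto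
  have "combo_state_sum c b (alpha_aux 0 m) Q H = state_sum c [RC i, LC i] Q H"
    unfolding combo_state_sum_def by (simp add: i(1))
  also have "\<dots> = (if Q i = i + 1 then inverse zz * H Q else 0)"
    using assms(4) i(2) pairing_ok_rc_pairing lc_pairing_rc_pairing by simp
  finally show ?thesis using zz_nonzero by simp
qed

text \<open>Once the state sum through alpha_k is known to select the pairings in which the bottom strand e
  is paired with i + 1, the four terms of the recursion for alpha_{k+1} (sigma being the crossing at i)
  combine to select those in which e is paired with i. The summands with a non-normal switch vanish
  because they pair two top strands.\<close>

lemma crossing_moves_partner:
  fixes H :: "(nat \<Rightarrow> nat) \<Rightarrow> rf"
  assumes i: "i + 1 < e" "b \<le> i" "i + 3 \<le> b + m" "e < c" "e + 1 = b + m"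
    and Q: "pairing_ok c Q" and H: "\<forall>Q'. top_paired b m Q' \<longrightarrow> H Q' = 0"
  shows "state_sum c [Cr i] Q (\<lambda>Q'. if Q' (i + 1) = e then state_sum c [Cr i] Q' H else 0)
      - zz * (if Q (i + 1) = e then state_sum c [Cr i] Q H else 0)
      - zz * state_sum c [Cr i] Q (\<lambda>Q'. if Q' (i + 1) = e then H Q' else 0)
      + zz ^ 2 * (if Q (i + 1) = e then H Q else 0)
    = (if Q i = e then H Q else 0)"
proof -
  let ?t = "cr_pairing i Q"
  have X: "state_sum c [Cr i] Q' F = (if Q' i \<noteq> i + 1 then (if normal_at i Q' then zz * F Q' else 0) + F (cr_pairing i Q') else 0)"
    if "pairing_ok c Q'" for Q' F
    using state_sum_crossing[OF that] i by simp
  have inv: "Q (Q j) = j" for j using pairing_ok_involution[OF Q] .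
  have t: "pairing_ok c ?t" using pairing_ok_cr_pairing[OF Q] i by simp
  have t_upper: "?t (i + 1) = e \<longleftrightarrow> Q i = e" and t_cusp: "?t i = i + 1 \<longleftrightarrow> Q i = i + 1"
    unfolding cr_pairing_apply tr_def using i inv by auto (metis inv n_not_Suc_n)+
  consider (cusp) "Q i = i + 1" | (upper) "Q i \<noteq> i + 1" "Q (i + 1) = e"
    | (lower) "Q i \<noteq> i + 1" "Q i = e" | (neither) "Q i \<noteq> i + 1" "Q (i + 1) \<noteq> e" "Q i \<noteq> e"
    by blast
  then show ?thesis
  proof cases
    case cusp
    then have "Q (i + 1) = i" using inv by metis
    with cusp i(1) show ?thesis by (simp add: X[OF Q])
  next
    case upper
    then have "Q i \<noteq> e" using inv by (metis n_not_Suc_n Suc_eq_plus1)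
    moreover have "H Q = 0 \<and> H ?t = 0" if "\<not> normal_at i Q"
      using not_normal_at_top_paired[OF upper _ that] top_paired_cr_pairing i H by auto
    ultimately show ?thesis using upper t_upper
      by (cases "normal_at i Q") (simp_all add: X[OF Q] t power2_eq_square algebra_simps)
  next
    case lower
    then have "Q (i + 1) \<noteq> e" using inv by (metis n_not_Suc_n Suc_eq_plus1)
    moreover have "H ?t = 0" if "\<not> normal_at i ?t"
      using not_normal_at_top_paired[of ?t i e b m] lower t_upper t_cusp that i H by auto
    ultimately show ?thesis using lower t_upper t_cusp
      by (cases "normal_at i ?t") (simp_all add: X[OF Q] X[OF t] Q t algebra_simps)
  next
    case neither
    then show ?thesis using t_upper by (simp add: X[OF Q])
  qed
qed

lemma combo_state_sum_alpha_aux_Suc: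
  fixes H :: "(nat \<Rightarrow> nat) \<Rightarrow> rf"
  assumes IH: "\<And>Q H. pairing_ok c Q \<Longrightarrow> \<forall>Q'. top_paired b m Q' \<longrightarrow> H Q' = 0 \<Longrightarrow>
      zz * combo_state_sum c b (alpha_aux j m) Q H = (if Q (i + 1) = e then H Q else 0)"
    and idx: "i + j + 3 = b + m" "e + 1 = b + m" "j + 3 \<le> m" "b + m \<le> c"
    and Q: "pairing_ok c Q" and H: "\<forall>Q'. top_paired b m Q' \<longrightarrow> H Q' = 0"
  shows "zz * combo_state_sum c b (alpha_aux (Suc j) m) Q H = (if Q i = e then H Q else 0)"
proof -
  let ?A = "alpha_aux j m"
  let ?X = "\<lambda>Q F. state_sum c [Cr i] Q F"
  have i: "i + 1 < e" "b \<le> i" "i + 3 \<le> b + m" "e < c" "b + (m - (j + 3)) = i" "2 \<le> c"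
    using idx by auto
  define H1 where "H1 = (\<lambda>Q'. ?X Q' H)"
  have H1: "\<forall>Q'. top_paired b m Q' \<longrightarrow> H1 Q' = 0"
  proof (intro allI impI)
    fix Q' assume "top_paired b m Q'"
    with i(2,3) H show "H1 Q' = 0"
      unfolding H1_def by (intro state_sum_crossings_top_paired[where b = b and m = m]) auto
  qed
  have A: "\<forall>x\<in>set ?A. count_preserving (snd x)"
    using count_preserving_alpha_aux[of j m] .
  have "zz * combo_state_sum c b (alpha_aux (Suc j) m) Q H =
      ?X Q (\<lambda>Q'. zz * combo_state_sum c b ?A Q' H1) - zz * (zz * combo_state_sum c b ?A Q H1)
      - zz * ?X Q (\<lambda>Q'. zz * combo_state_sum c b ?A Q' H) + zz ^ 2 * (zz * combo_state_sum c b ?A Q H)"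
    by (simp add: Let_def combo_state_sum_append combo_state_sum_cscale combo_state_sum_crossing_before
        combo_state_sum_crossing_after[OF A i(6)]
        H1_def state_sum_mult i(5) algebra_simps)
  also have "\<dots> = ?X Q (\<lambda>Q'. if Q' (i + 1) = e then H1 Q' else 0) - zz * (if Q (i + 1) = e then H1 Q else 0)
      - zz * ?X Q (\<lambda>Q'. if Q' (i + 1) = e then H Q' else 0) + zz ^ 2 * (if Q (i + 1) = e then H Q else 0)"
    using IH[OF _ H1] IH[OF _ H] Q by (simp cong: state_sum_cong[OF Q])
  also have "\<dots> = (if Q i = e then H Q else 0)"
    unfolding H1_def using crossing_moves_partner[OF i(1-4) idx(2) Q H] .
  finally show ?thesis .
qed

lemma combo_state_sum_alpha:
  assumes "1 < k" "k \<le> m" "b + m \<le> c" "i + k = b + m" "e + 1 = b + m"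
    and "pairing_ok c Q" "\<forall>Q'. top_paired b m Q' \<longrightarrow> H Q' = 0"
  shows "zz * combo_state_sum c b (alpha k m) Q H = (if Q i = e then H Q else 0)"
proof -
  have "zz * combo_state_sum c b (alpha_aux j m) Q H = (if Q i = e then H Q else 0)"
    if "i + j + 2 = b + m" "j + 2 \<le> m" "pairing_ok c Q" "\<forall>Q'. top_paired b m Q' \<longrightarrow> H Q' = 0"
    for i j Q H
    using that
  proof (induction j arbitrary: i Q H)
    case 0
    then show ?case using combo_state_sum_alpha_aux_0[of i b m c Q H] assms(3,5) by simp
  next
    case (Suc j)
    then show ?case
      using combo_state_sum_alpha_aux_Suc[where i = i and e = e and j = j] Suc.IH[of "i + 1"] assms(3,5)
      by simp
  qed
  with assms show ?thesis unfolding alpha_def by simp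
qed

section \<open>Ruling polynomials of satellites\<close>

lemma foldl_cnt_after_ncopy_take:
  assumes "legendrian_knot_front wK" "p \<le> length wK"
  shows "foldl cnt_after 0 (ncopy n (take p wK)) = n * cntf 0 wK p"
proof -
  have "\<forall>k<length (take p wK). piece_ok (cntf 0 (take p wK) k) (take p wK ! k)"
    using assms unfolding legendrian_knot_front_def valid_front_def cntf_def
    by (simp add: min_absorb1 take_take)
  from foldl_cnt_after_ncopy[OF this, of n] show ?thesis unfolding cntf_def by simp
qed

definition reduced_indicator :: "nat \<Rightarrow> nat \<Rightarrow> (nat \<Rightarrow> nat) \<Rightarrow> rf" where
  "reduced_indicator b k Q = (if \<forall>a<k. \<forall>c<k. Q (b + a) \<noteq> b + c then 1 else 0)"

lemma state_sum_braid_top_paired: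
  assumes "\<forall>x\<in>set bw. \<exists>i. x = Cr i \<and> i + 1 < m - 1" and "top_paired b m Q"
  shows "state_sum c (map (shiftp b) bw) Q (\<lambda>Q'. reduced_indicator b (m - 1) Q' * G Q') = 0"
proof (rule state_sum_crossings_top_paired[OF _ _ assms(2)])
  show "\<forall>x\<in>set (map (shiftp b) bw). \<exists>i. x = Cr i \<and> b \<le> i \<and> i + 3 \<le> b + m"
    using assms(1) by fastforce
  show "\<forall>Q'. top_paired b m Q' \<longrightarrow> reduced_indicator b (m - 1) Q' * G Q' = 0"
    unfolding top_paired_def reduced_indicator_def by auto
qed

definition right_state_sum :: "nat \<Rightarrow> piece list \<Rightarrow> nat \<Rightarrow> (nat \<Rightarrow> nat) \<Rightarrow> rf" where
  "right_state_sum n wK p Q = weighted_state_sum (n * cntf 0 wK p) (ncopy n (drop p wK)) Q (\<lambda>_ _. 1)"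

lemma Rtilde_eq_state_sum:
  assumes knot: "legendrian_knot_front wK" "p \<le> length wK"
    and eta: "foldl cnt_after (n * cntf 0 wK p) eta = n * cntf 0 wK p"
  shows "Rtilde n wK p s k eta =
    state_sum 0 (ncopy n (take p wK)) id (\<lambda>Q. state_sum (n * cntf 0 wK p) (map (shiftp (n * s)) eta) Q
      (\<lambda>Q'. reduced_indicator (n * s) k Q' * right_state_sum n wK p Q'))"
proof -
  define u where "u = ncopy n (take p wK) @ map (shiftp (n * s)) eta"
  define W where "W = u @ ncopy n (drop p wK)"
  define P where "P Q \<longleftrightarrow> (\<forall>a<k. \<forall>c<k. Q (n * s + a) \<noteq> n * s + c)" for Q :: "nat \<Rightarrow> nat"
  have u: "foldl cnt_after 0 u = n * cntf 0 wK p"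
    using eta foldl_cnt_after_ncopy_take[OF knot] unfolding u_def by simp
  have weights: "(\<lambda>j Q. if j = length u \<longrightarrow> P Q then 1 else 0 :: rf) =
      (\<lambda>j Q. if j = length u then reduced_indicator (n * s) k Q else 1)"
    by (auto simp: reduced_indicator_def P_def fun_eq_iff)
  have "{\<rho>\<in>rulings W. reduced_at (length u) (n * s) k \<rho>} =
      {\<rho>\<in>rulings W. \<forall>j\<le>length W. j = length u \<longrightarrow> P (snd \<rho> j)}"
    unfolding reduced_at_def P_def W_def by auto
  then have "Rtilde n wK p s k eta = (\<Sum>\<rho>\<in>{\<rho>\<in>rulings W. \<forall>j\<le>length W. j = length u \<longrightarrow> P (snd \<rho> j)}.
      zz powi jr W \<rho>)"
    unfolding Rtilde_def Let_def sat_def W_def u_def by simp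
  also have "\<dots> = weighted_state_sum 0 W id (\<lambda>j Q. if j = length u \<longrightarrow> P Q then 1 else 0)"
    by (rule sum_rulings_filter)
  also have "\<dots> = state_sum 0 u id (\<lambda>Q'. reduced_indicator (n * s) k Q' * right_state_sum n wK p Q')"
    unfolding weights W_def weighted_state_sum_single_weight u right_state_sum_def ..
  finally show ?thesis
    using eta foldl_cnt_after_ncopy_take[OF knot] by (simp add: u_def state_sum_append)
qed

lemma Rtau_eq_state_sum:
  assumes knot: "legendrian_knot_front wK" "p \<le> length wK"
    and u: "foldl cnt_after (n * cntf 0 wK p) u = n * cntf 0 wK p"
    and v: "foldl cnt_after (n * cntf 0 wK p) v = n * cntf 0 wK p"
  shows "Rtau n wK p s k m (length u) (u @ v) =
    state_sum 0 (ncopy n (take p wK)) id (\<lambda>Q. state_sum (n * cntf 0 wK p) (map (shiftp (n * s)) u) Q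
      (\<lambda>Q1. (if Q1 (n * s + (k - 1)) = n * s + (m - 1) then 1 else 0) *
        state_sum (n * cntf 0 wK p) (map (shiftp (n * s)) v) Q1
          (\<lambda>Q'. reduced_indicator (n * s) (m - 1) Q' * right_state_sum n wK p Q')))"
proof -
  define c where "c = n * cntf 0 wK p"
  define u' where "u' = ncopy n (take p wK) @ map (shiftp (n * s)) u"
  define v' where "v' = map (shiftp (n * s)) v"
  define W where "W = u' @ v' @ ncopy n (drop p wK)"
  define S where "S Q \<longleftrightarrow> Q (n * s + (k - 1)) = n * s + (m - 1)" for Q :: "nat \<Rightarrow> nat"
  define P where "P Q \<longleftrightarrow> (\<forall>a<m - 1. \<forall>c<m - 1. Q (n * s + a) \<noteq> n * s + c)" for Q :: "nat \<Rightarrow> nat"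
  define g where "g = (\<lambda>j Q. (if j = 0 then if S Q then 1 else 0 else 1) *
      (if j = length v' then reduced_indicator (n * s) (m - 1) Q else 1))"
  have u': "foldl cnt_after 0 u' = c" and v': "foldl cnt_after c v' = c"
    using u v foldl_cnt_after_ncopy_take[OF knot] unfolding c_def u'_def v'_def by simp_all
  have at: "(\<forall>j\<le>L. (j = q1 \<longrightarrow> A j) \<and> (j = q2 \<longrightarrow> B j)) \<longleftrightarrow> A q1 \<and> B q2"
    if "q1 \<le> L" "q2 \<le> L" for L q1 q2 and A B :: "nat \<Rightarrow> bool"
    using that by auto
  have weights: "(\<lambda>j Q. if (j = length u' \<longrightarrow> S Q) \<and> (j = length u' + length v' \<longrightarrow> P Q) then 1 else 0 :: rf) =
      (\<lambda>j Q. if j < length u' then 1 else g (j - length u') Q)"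
    by (auto simp: g_def reduced_indicator_def P_def fun_eq_iff)
  have "{\<rho>\<in>rulings W. reduced_at (length u' + length v') (n * s) (m - 1) \<rho> \<and> S (snd \<rho> (length u'))} =
      {\<rho>\<in>rulings W. \<forall>j\<le>length W. (j = length u' \<longrightarrow> S (snd \<rho> j)) \<and>
        (j = length u' + length v' \<longrightarrow> P (snd \<rho> j))}"
    by (auto simp: at reduced_at_def P_def W_def)
  then have "Rtau n wK p s k m (length u) (u @ v) = (\<Sum>\<rho>\<in>{\<rho>\<in>rulings W. \<forall>j\<le>length W.
      (j = length u' \<longrightarrow> S (snd \<rho> j)) \<and> (j = length u' + length v' \<longrightarrow> P (snd \<rho> j))}. zz powi jr W \<rho>)"
    unfolding Rtau_def Let_def sat_def S_def W_def u'_def v'_def by (simp add: add.assoc)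
  also have "\<dots> = weighted_state_sum 0 W id
      (\<lambda>j Q. if (j = length u' \<longrightarrow> S Q) \<and> (j = length u' + length v' \<longrightarrow> P Q) then 1 else 0)"
    by (rule sum_rulings_filter)
  also have "\<dots> = state_sum 0 u' id (\<lambda>Q. weighted_state_sum c (v' @ ncopy n (drop p wK)) Q g)"
    unfolding weights W_def by (subst weighted_state_sum_append) (simp_all add: u')
  also have "\<dots> = state_sum 0 u' id (\<lambda>Q. (if S Q then 1 else 0) *
      state_sum c v' Q (\<lambda>Q'. reduced_indicator (n * s) (m - 1) Q' * right_state_sum n wK p Q'))"
    unfolding g_def weighted_state_sum_factor weighted_state_sum_single_weight v'
    unfolding c_def right_state_sum_def ..
  finally show ?thesis
    using foldl_cnt_after_ncopy_take[OF knot] by (simp add: u'_def v'_def S_def c_def state_sum_append)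
qed

lemma Rtilde_lin_tmul:
  "Rtilde_lin n wK p s k (tmul [(1, v)] (tmul A B)) =
    (\<Sum>(b, u)\<leftarrow>B. b * (\<Sum>(a, w)\<leftarrow>A. a * Rtilde n wK p s k (u @ w @ v)))"
  by (induction A)
    (auto simp: tmul_def Rtilde_lin_def sum_list_addf sum_list_const_mult algebra_simps split_def o_def)

lemma Rtilde_alpha_eq_Rtau:
  assumes knot: "legendrian_knot_front wK" "p \<le> length wK" "s < cntf 0 wK p"
    and km: "1 < k" "k \<le> m" "m \<le> n"
    and bw: "pos_perm_braid (m - 1) bw"
    and u: "valid_front n u n"
  shows "zz * (\<Sum>(a, v)\<leftarrow>alpha k m. a * Rtilde n wK p s (m - 1) (u @ v @ bw)) =
    Rtau n wK p s (m - k + 1) m (length u) (u @ bw)"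
proof -
  define c where "c = n * cntf 0 wK p"
  define b where "b = n * s"
  define A where "A = ncopy n (take p wK)"
  define Psi where "Psi = (\<lambda>Q. state_sum c (map (shiftp b) bw) Q
    (\<lambda>Q'. reduced_indicator b (m - 1) Q' * right_state_sum n wK p Q'))"
  have "n * (s + 1) \<le> c" unfolding c_def using knot(3) by (intro mult_le_mono2) simp
  then have bm: "b + m \<le> c" "n \<le> c" "2 \<le> c" using km unfolding b_def by auto
  have A: "foldl cnt_after 0 A = c" "pairing_ok 0 id"
    unfolding A_def c_def using foldl_cnt_after_ncopy_take[OF knot(1,2)] by (simp_all add: pairing_ok_0_iff)
  have bw_crossings: "\<forall>x\<in>set bw. \<exists>i. x = Cr i \<and> i + 1 < m - 1"
    using bw unfolding pos_perm_braid_def by simp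
  have count_u: "foldl cnt_after c u = c"
    using valid_front_foldl_cnt_after[OF u bm(2)] .
  have count_bw: "foldl cnt_after c bw = c"
    using bw_crossings by (intro foldl_cnt_after_crossings) auto
  have count_alpha: "foldl cnt_after c v = c" if "(a, v) \<in> set (alpha k m)" for a v
    using that count_preserving_alpha_aux bm(3) unfolding alpha_def count_preserving_def by fastforce
  have Psi: "\<forall>Q'. top_paired b m Q' \<longrightarrow> Psi Q' = 0"
    unfolding Psi_def using state_sum_braid_top_paired[OF bw_crossings] by blast
  have Rtilde_term: "Rtilde n wK p s (m - 1) (u @ v @ bw) = state_sum 0 A id
      (\<lambda>Q. state_sum c (map (shiftp b) u) Q (\<lambda>Q1. state_sum c (map (shiftp b) v) Q1 Psi))"
    if "(a, v) \<in> set (alpha k m)" for a v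
  proof -
    have "foldl cnt_after (n * cntf 0 wK p) (u @ v @ bw) = n * cntf 0 wK p"
      using count_u count_bw count_alpha[OF that] unfolding c_def by simp
    with count_u count_alpha[OF that] show ?thesis
      by (simp add: Rtilde_eq_state_sum[OF knot(1,2)] state_sum_append Psi_def A_def b_def c_def)
  qed
  have "zz * (\<Sum>(a, v)\<leftarrow>alpha k m. a * Rtilde n wK p s (m - 1) (u @ v @ bw)) =
      zz * (\<Sum>(a, v)\<leftarrow>alpha k m. a * state_sum 0 A id (\<lambda>Q. state_sum c (map (shiftp b) u) Q
        (\<lambda>Q1. state_sum c (map (shiftp b) v) Q1 Psi)))"
    by (intro arg_cong[where f = "\<lambda>x. zz * sum_list x"] map_cong refl) (auto dest: Rtilde_term)
  also have "\<dots> = state_sum 0 A id (\<lambda>Q. state_sum c (map (shiftp b) u) Q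
      (\<lambda>Q1. zz * combo_state_sum c b (alpha k m) Q1 Psi))"
    by (simp add: combo_state_sum_def state_sum_mult state_sum_sum_list)
  also have "\<dots> = state_sum 0 A id (\<lambda>Q. state_sum c (map (shiftp b) u) Q
      (\<lambda>Q1. (if Q1 (b + (m - k)) = b + (m - 1) then 1 else 0) * Psi Q1))"
  proof (intro state_sum_cong[OF A(2)] state_sum_cong)
    fix Q1 assume "pairing_ok (foldl cnt_after c (map (shiftp b) u)) Q1"
    then have "pairing_ok c Q1" using count_u by simp
    then show "zz * combo_state_sum c b (alpha k m) Q1 Psi =
        (if Q1 (b + (m - k)) = b + (m - 1) then 1 else 0) * Psi Q1"
      using combo_state_sum_alpha[where i = "b + (m - k)" and e = "b + (m - 1)"] km bm(1) Psi by simp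
  qed (simp add: A(1))
  also have "\<dots> = Rtau n wK p s (m - k + 1) m (length u) (u @ bw)"
    using count_u count_bw km
    by (simp add: Rtau_eq_state_sum[OF knot(1,2)] Psi_def A_def b_def c_def)
  finally show ?thesis .
qed

theorem lemma2p10:
  fixes wK :: "piece list" and ori :: "nat \<Rightarrow> nat \<Rightarrow> bool"
    and p s n k m :: nat and bw :: "piece list" and nu :: combo
  assumes "legendrian_knot_front wK" and "orientation_ok wK ori"
    and "p \<le> length wK" and "s < cntf 0 wK p" and "ori p s"
    and "1 < k" and "k \<le> m" and "m \<le> n"
    and "pos_perm_braid (m - 1) bw"
    and "\<forall>(c, w)\<in>set nu. in_R c \<and> valid_front n w n"
  shows "zz * Rtilde_lin n wK p s (m - 1) (tmul [(1, bw)] (tmul (alpha k m) nu))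
       = sum_list (map (\<lambda>(c, w). c * Rtau n wK p s (m - k + 1) m (length w) (w @ bw)) nu)"
proof -
  have "zz * Rtilde_lin n wK p s (m - 1) (tmul [(1, bw)] (tmul (alpha k m) nu)) =
      (\<Sum>(c, w)\<leftarrow>nu. c * (zz * (\<Sum>(a, v)\<leftarrow>alpha k m. a * Rtilde n wK p s (m - 1) (w @ v @ bw))))"
    unfolding Rtilde_lin_tmul by (simp add: sum_list_const_mult split_def algebra_simps)
  also have "\<dots> = (\<Sum>(c, w)\<leftarrow>nu. c * Rtau n wK p s (m - k + 1) m (length w) (w @ bw))"
  proof (intro arg_cong[where f = sum_list] map_cong refl, clarify)
    fix c w assume "(c, w) \<in> set nu"
    then have "valid_front n w n" using assms(10) by auto
    from Rtilde_alpha_eq_Rtau[OF assms(1,3,4,6-9) this]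
    show "c * (zz * (\<Sum>(a, v)\<leftarrow>alpha k m. a * Rtilde n wK p s (m - 1) (w @ v @ bw))) =
        c * Rtau n wK p s (m - k + 1) m (length w) (w @ bw)" by simp
  qed
  finally show ?thesis .
qed

end
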